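(* Let $S$ be an integral domain of characteristic zero, and let $R$ be a subring of $S$. Suppose $g,h\in S[x]$ are monic polynomials with zero constant term (i.e. $g,h\in xS[x]$) such that $g(h(x))\in R[x]$. Then all coefficients of $g$ and of $h$ lie in $\mathbb{Q}.R$.
   Context: Here $\mathbb{Q}.R$ denotes the subring of the fraction field of $S$ generated by $\mathbb{Q}$ and $R$, i.e. the set of elements $r/n$ with $r\in R$ and $n$ a positive integer (this makes sense since $S$ has characteristic zero). *)

theory Defs
  imports "HOL-Computational_Algebra.Polynomial" "HOL-Computational_Algebra.Fraction_Field"
begin

definition is_subring :: "'a :: comm_ring_1 set \<Rightarrow> bool" where
  "is_subring R \<longleftrightarrow> 0 \<in> R \<and> 1 \<in> R \<and>
     (\<forall>x\<in>R. \<forall>y\<in>R. x + y \<in> R \<and> x * y \<in> R) \<and> (\<forall>x\<in>R. - x \<in> R)"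

definition QR :: "'a :: idom set \<Rightarrow> 'a fract set" where
  "QR R = {Fract r (of_nat n) | r n. r \<in> R \<and> n > 0}"

end

theory Submission
  imports Defs
begin

text \<open>Let \<open>B\<close> be the set of elements \<open>x\<close> of \<open>S\<close> with \<open>n x \<in> R\<close> for some positive integer \<open>n\<close>;
  it is a subring closed under division by positive integers, and \<open>B \<subseteq> Q.R\<close>.
  Write \<open>d = deg g\<close>, \<open>e = deg h\<close>. The coefficients of \<open>h\<close> are shown to lie in \<open>B\<close> from the top down:
  if those above \<open>x\<^sup>m\<close> do (\<open>0 < m < e\<close>), then the coefficient of \<open>x\<^bsup>m + (d-1)e\<^esup>\<close> in \<open>g(h(x))\<close>
  equals \<open>d h\<^sub>m\<close> plus an element of \<open>B\<close>, since only \<open>h\<^sup>d\<close> reaches that degree.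
  Knowing \<open>h\<close>, the coefficients of \<open>g\<close> follow from the top down as well, because \<open>h\<close> is monic.\<close>

lemma pcompose_monom_eq_smult_power: "pcompose (monom c n) q = smult c (q ^ n)"
  by (induction n) (auto simp: monom_Suc pcompose_pCons monom_0)

lemma coeff_mult_at_degree_bounds:
  fixes p q :: "'a::comm_semiring_1 poly"
  assumes "degree p \<le> a" "degree q \<le> b"
  shows "coeff (p * q) (a + b) = coeff p a * coeff q b"
proof (cases "degree p = a \<and> degree q = b")
  case True
  then show ?thesis using coeff_mult_degree_sum[of p q] by simp
next
  case False
  then have "degree p < a \<or> degree q < b" using assms by auto
  moreover have "degree (p * q) \<le> degree p + degree q" by (rule degree_mult_le)
  ultimately show ?thesis using assms by (auto simp: coeff_eq_0)
qed

lemma degree_power_le_mult: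
  fixes p :: "'a::comm_semiring_1 poly"
  shows "degree p \<le> a \<Longrightarrow> degree (p ^ k) \<le> k * a"
  by (metis degree_power_le dual_order.trans mult.commute mult_le_mono2)

lemma coeff_power_at_degree_bound:
  fixes p :: "'a::comm_semiring_1 poly"
  assumes "degree p \<le> a"
  shows "coeff (p ^ k) (k * a) = coeff p a ^ k"
proof (induction k)
  case (Suc k)
  have "coeff (p ^ Suc k) (Suc k * a) = coeff (p * p ^ k) (a + k * a)" by simp
  also have "\<dots> = coeff p a * coeff (p ^ k) (k * a)"
    using assms degree_power_le_mult[OF assms] by (rule coeff_mult_at_degree_bounds)
  finally show ?case using Suc by simp
qed simp

lemma sum_power_products_top_coeff:
  fixes p q :: "'a::comm_semiring_1 poly" and d :: nat
  assumes "degree p \<le> e" "degree q \<le> e" "coeff p e = 1" "coeff q e = 1"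
  defines "S \<equiv> \<Sum>i<d. q ^ (d - Suc i) * p ^ i"
  shows "degree S \<le> (d - 1) * e" and "coeff S ((d - 1) * e) = of_nat d"
proof -
  have exponents: "(d - Suc i) * e + i * e = (d - 1) * e" if "i < d" for i
  proof -
    have "d - Suc i + i = d - 1" using that by linarith
    then show ?thesis by (metis add_mult_distrib)
  qed
  have deg_q: "degree (q ^ (d - Suc i)) \<le> (d - Suc i) * e"
   and deg_p: "degree (p ^ i) \<le> i * e" for i
    using assms(1,2) by (simp_all add: degree_power_le_mult)
  have "degree (q ^ (d - Suc i) * p ^ i) \<le> (d - 1) * e" if "i < d" for i
    using degree_mult_le[of "q ^ (d - Suc i)" "p ^ i"] deg_q[of i] deg_p[of i] exponents[OF that]
    by linarith
  then show "degree S \<le> (d - 1) * e"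
    unfolding S_def by (intro degree_sum_le) auto
  have "coeff (q ^ (d - Suc i) * p ^ i) ((d - 1) * e) = 1" if "i < d" for i
    using coeff_mult_at_degree_bounds[OF deg_q deg_p, of i] exponents[OF that, symmetric]
      coeff_power_at_degree_bound[OF assms(1)] coeff_power_at_degree_bound[OF assms(2)] assms(3,4)
    by simp
  then show "coeff S ((d - 1) * e) = of_nat d"
    unfolding S_def coeff_sum by simp
qed

lemma coeff_power_diff_below_top:
  fixes p q :: "'a::comm_ring_1 poly"
  assumes "degree p \<le> e" "degree q \<le> e" "coeff p e = 1" "coeff q e = 1" "degree (p - q) \<le> m"
  shows "coeff (p ^ d - q ^ d) (m + (d - 1) * e) = of_nat d * coeff (p - q) m"
proof -
  define S where "S = (\<Sum>i<d. q ^ (d - Suc i) * p ^ i)"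
  have "p ^ d - q ^ d = (p - q) * S"
    unfolding S_def by (rule power_diff_sumr2)
  then show ?thesis
    using coeff_mult_at_degree_bounds[OF assms(5) sum_power_products_top_coeff(1)[OF assms(1-4)]]
      sum_power_products_top_coeff(2)[OF assms(1-4)]
    by (simp add: S_def mult.commute)
qed

lemma coeff_pcompose_monic_above:
  fixes g h :: "'a::{comm_ring_1,semiring_no_zero_divisors} poly"
  assumes "lead_coeff g = 1" and "(degree g - 1) * degree h < n"
  shows "coeff (pcompose g h) n = coeff (h ^ degree g) n"
proof -
  define g' where "g' = g - monom 1 (degree g)"
  have "degree g' \<le> degree g - 1"
    using assms(1) by (intro degree_le) (auto simp: g'_def coeff_monom coeff_eq_0)
  then have "degree (pcompose g' h) < n"
    using assms(2) by (metis degree_pcompose le_less_trans mult_le_mono1)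
  moreover have "pcompose g h = pcompose g' h + h ^ degree g"
    by (simp add: g'_def pcompose_diff pcompose_monom_eq_smult_power)
  ultimately show ?thesis by (simp add: coeff_eq_0)
qed

lemma degree_pos_if_monic_no_constant:
  fixes p :: "'a::zero_neq_one poly"
  shows "lead_coeff p = 1 \<Longrightarrow> coeff p 0 = 0 \<Longrightarrow> degree p > 0"
  by (rule gr0I) simp

lemma is_subringD:
  assumes "is_subring B"
  shows "0 \<in> B" "1 \<in> B" "x \<in> B \<Longrightarrow> y \<in> B \<Longrightarrow> x + y \<in> B"
    "x \<in> B \<Longrightarrow> y \<in> B \<Longrightarrow> x * y \<in> B" "x \<in> B \<Longrightarrow> - x \<in> B"
  using assms unfolding is_subring_def by auto

lemma subring_diff_closed:
  assumes "is_subring B" "x \<in> B" "y \<in> B"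
  shows "x - y \<in> B"
  using is_subringD(3)[OF assms(1,2) is_subringD(5)[OF assms(1,3)]] by simp

lemma subring_coeff_power_closed:
  assumes "is_subring B" "\<And>i. coeff p i \<in> B"
  shows "coeff (p ^ n) i \<in> B"
proof (induction n arbitrary: i)
  case 0
  show ?case using is_subringD(1,2)[OF assms(1)] by (simp add: coeff_1)
next
  case (Suc n)
  show ?case
    unfolding power_Suc
    by (rule coeff_mult_semiring_closed[of B]) (use is_subringD[OF assms(1)] assms(2) Suc in auto)
qed

lemma subring_coeffs_left_of_pcompose:
  fixes g h :: "'a::idom poly"
  assumes B: "is_subring B" and h: "\<And>i. coeff h i \<in> B" "lead_coeff h = 1" "degree h > 0"
    and gh: "\<forall>i. coeff (pcompose g h) i \<in> B"
  shows "coeff g i \<in> B"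
  using gh
proof (induction "degree g" arbitrary: g i rule: less_induct)
  case less
  define n where "n = degree g"
  define c where "c = lead_coeff g"
  have "lead_coeff (pcompose g h) = c"
    using lead_coeff_comp[OF h(3), of g] h(2) by (simp add: c_def)
  then have c: "c \<in> B" using less.prems by metis
  show ?case
  proof (cases "n = 0")
    case True
    then have "g = [:c:]" by (simp add: n_def c_def degree_0_id)
    then show ?thesis using c is_subringD(1)[OF B] by (simp add: coeff_pCons split: nat.split)
  next
    case False
    define g' where "g' = g - monom c n"
    have "degree g' \<le> n - 1"
      by (intro degree_le) (auto simp: g'_def c_def n_def coeff_monom coeff_eq_0)
    then have lower: "degree g' < degree g" using False n_def by linarith
    have "pcompose g' h = pcompose g h - smult c (h ^ n)"
      by (simp add: g'_def pcompose_diff pcompose_monom_eq_smult_power)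
    then have "\<forall>i. coeff (pcompose g' h) i \<in> B"
      using less.prems c h(1)
      by (auto intro!: subring_diff_closed[OF B] is_subringD(4)[OF B] subring_coeff_power_closed[OF B])
    then have "coeff g' i \<in> B" by (rule less.hyps[OF lower])
    moreover have "coeff g i = coeff g' i + (if n = i then c else 0)"
      by (simp add: g'_def coeff_monom)
    ultimately show ?thesis using c is_subringD(3)[OF B] by auto
  qed
qed

lemma degree_times_right_coeff_in_subring:
  fixes g h :: "'a::idom poly"
  assumes B: "is_subring B" and g: "lead_coeff g = 1" and h: "lead_coeff h = 1"
    and gh: "\<forall>i. coeff (pcompose g h) i \<in> B"
    and m: "0 < m" "m < degree h" and above: "\<And>i. m < i \<Longrightarrow> coeff h i \<in> B"
  shows "of_nat (degree g) * coeff h m \<in> B"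
proof -
  define d e where "d = degree g" and "e = degree h"
  define high where "high = h - poly_cutoff (Suc m) h"
  have coeff_high: "coeff high i = (if i \<le> m then 0 else coeff h i)" for i
    by (simp add: high_def coeff_poly_cutoff)
  have high_B: "coeff high i \<in> B" for i
    using above is_subringD(1)[OF B] by (simp add: coeff_high)
  have "degree high \<le> e"
    by (intro degree_le) (simp add: coeff_high e_def coeff_eq_0)
  moreover have "coeff high e = 1" using m h by (simp add: coeff_high e_def)
  moreover have "h - high = poly_cutoff (Suc m) h" by (simp add: high_def)
  then have "degree (h - high) \<le> m" "coeff (h - high) m = coeff h m"
    by (auto intro!: degree_le simp: coeff_poly_cutoff)
  ultimately have "coeff (h ^ d - high ^ d) (m + (d - 1) * e) = of_nat d * coeff h m"
    using coeff_power_diff_below_top[of h e high m d] h by (simp add: e_def)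
  moreover have "coeff (h ^ d) (m + (d - 1) * e) = coeff (pcompose g h) (m + (d - 1) * e)"
    using coeff_pcompose_monic_above[OF g] m by (simp add: d_def e_def)
  ultimately have "of_nat d * coeff h m
      = coeff (pcompose g h) (m + (d - 1) * e) - coeff (high ^ d) (m + (d - 1) * e)"
    by simp
  also have "\<dots> \<in> B"
    using gh subring_coeff_power_closed[OF B high_B] by (intro subring_diff_closed[OF B]) auto
  finally show ?thesis by (simp add: d_def)
qed

lemma subring_coeffs_right_of_pcompose:
  fixes g h :: "'a::idom poly"
  assumes B: "is_subring B" and Bdiv: "\<And>n x. n > 0 \<Longrightarrow> of_nat n * x \<in> B \<Longrightarrow> x \<in> B"
    and g: "lead_coeff g = 1" "coeff g 0 = 0" and h: "lead_coeff h = 1" "coeff h 0 = 0"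
    and gh: "\<forall>i. coeff (pcompose g h) i \<in> B"
  shows "coeff h i \<in> B"
proof -
  have top: "coeff h j \<in> B" if "degree h \<le> j" for j
    using h(1) is_subringD(1,2)[OF B] that by (cases "j = degree h") (auto simp: coeff_eq_0)
  have "degree g > 0" using g by (rule degree_pos_if_monic_no_constant)
  show ?thesis
  proof (induction "degree h - i" arbitrary: i rule: less_induct)
    case less
    consider "degree h \<le> i" | "i = 0" | "0 < i" "i < degree h" by linarith
    then show ?case
    proof cases
      case 1
      then show ?thesis by (rule top)
    next
      case 2
      then show ?thesis using h(2) is_subringD(1)[OF B] by simp
    next
      case 3
      have "coeff h j \<in> B" if "i < j" for j
      proof (cases "degree h \<le> j")
        case False
        then show ?thesis using 3 that by (intro less.hyps) auto
      qed (rule top)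
      then have "of_nat (degree g) * coeff h i \<in> B"
        by (rule degree_times_right_coeff_in_subring[OF B g(1) h(1) gh 3])
      with \<open>degree g > 0\<close> show ?thesis by (rule Bdiv)
    qed
  qed
qed

definition nat_saturation :: "'a::comm_ring_1 set \<Rightarrow> 'a set" where
  "nat_saturation R = {x. \<exists>n>0. of_nat n * x \<in> R}"

lemma nat_saturationI: "n > 0 \<Longrightarrow> of_nat n * x \<in> R \<Longrightarrow> x \<in> nat_saturation R"
  unfolding nat_saturation_def by auto

lemma nat_saturationE:
  assumes "x \<in> nat_saturation R"
  obtains n where "n > 0" "of_nat n * x \<in> R"
  using assms unfolding nat_saturation_def by auto

lemma nat_saturation_superset: "x \<in> R \<Longrightarrow> x \<in> nat_saturation R"
  by (rule nat_saturationI[of 1]) simp_all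

lemma nat_saturation_div_closed:
  assumes "n > 0" "of_nat n * x \<in> nat_saturation R"
  shows "x \<in> nat_saturation R"
proof -
  obtain k where "k > 0" "of_nat k * (of_nat n * x) \<in> R"
    using assms(2) by (rule nat_saturationE)
  with assms(1) show ?thesis
    by (intro nat_saturationI[of "k * n"]) (simp_all add: mult.assoc)
qed

lemma subring_of_nat: "is_subring R \<Longrightarrow> of_nat n \<in> R"
  by (induction n) (auto intro: is_subringD)

lemma is_subring_nat_saturation:
  assumes R: "is_subring R"
  shows "is_subring (nat_saturation R)"
proof -
  have closed: "x + y \<in> nat_saturation R \<and> x * y \<in> nat_saturation R"
    if x: "x \<in> nat_saturation R" and y: "y \<in> nat_saturation R" for x y
  proof -
    obtain n where n: "n > 0" "of_nat n * x \<in> R"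
      using x by (rule nat_saturationE)
    obtain m where m: "m > 0" "of_nat m * y \<in> R"
      using y by (rule nat_saturationE)
    have "of_nat (n * m) * (x + y) = of_nat m * (of_nat n * x) + of_nat n * (of_nat m * y)"
      by (simp add: algebra_simps)
    also have "\<dots> \<in> R"
      using is_subringD(4)[OF R subring_of_nat[OF R] n(2)] is_subringD(4)[OF R subring_of_nat[OF R] m(2)]
      by (rule is_subringD(3)[OF R])
    finally have sum: "of_nat (n * m) * (x + y) \<in> R" .
    have "of_nat (n * m) * (x * y) = (of_nat n * x) * (of_nat m * y)"
      by (simp add: algebra_simps)
    also have "\<dots> \<in> R"
      using R n(2) m(2) by (rule is_subringD(4))
    finally have prod: "of_nat (n * m) * (x * y) \<in> R" .
    have "n * m > 0" using n(1) m(1) by simp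
    with sum prod show ?thesis by (blast intro: nat_saturationI)
  qed
  have "- x \<in> nat_saturation R" if x: "x \<in> nat_saturation R" for x
  proof -
    obtain n where "n > 0" "of_nat n * x \<in> R"
      using x by (rule nat_saturationE)
    then show ?thesis
      using is_subringD(5)[OF R] by (intro nat_saturationI[of n]) simp_all
  qed
  with closed show ?thesis
    unfolding is_subring_def using is_subringD(1,2)[OF R] nat_saturation_superset by blast
qed

lemma Fract_nat_saturation_in_QR:
  fixes R :: "'a::{idom,ring_char_0} set"
  assumes "x \<in> nat_saturation R"
  shows "Fract x 1 \<in> QR R"
proof -
  obtain n where n: "n > 0" "of_nat n * x \<in> R"
    using assms by (rule nat_saturationE)
  have "Fract x 1 = Fract (of_nat n * x) (of_nat n)"
    using n by (subst eq_fract) (auto simp: algebra_simps)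
  then show ?thesis unfolding QR_def using n by blast
qed

theorem proposition2p1:
  fixes R :: "'a :: {idom, ring_char_0} set"
    and g h :: "'a poly"
  assumes "is_subring R"
    and "lead_coeff g = 1" and "coeff g 0 = 0"
    and "lead_coeff h = 1" and "coeff h 0 = 0"
    and "\<forall>i. coeff (pcompose g h) i \<in> R"
  shows "(\<forall>i. Fract (coeff g i) 1 \<in> QR R) \<and> (\<forall>i. Fract (coeff h i) 1 \<in> QR R)"
proof -
  let ?B = "nat_saturation R"
  have B: "is_subring ?B" using assms(1) by (rule is_subring_nat_saturation)
  have gh: "\<forall>i. coeff (pcompose g h) i \<in> ?B" using assms(6) nat_saturation_superset by blast
  have h: "coeff h i \<in> ?B" for i
    by (rule subring_coeffs_right_of_pcompose[OF B _ assms(2-5) gh]) (rule nat_saturation_div_closed)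
  have "degree h > 0" using assms(4,5) by (rule degree_pos_if_monic_no_constant)
  then have g: "coeff g i \<in> ?B" for i
    by (rule subring_coeffs_left_of_pcompose[OF B h assms(4) _ gh])
  show ?thesis using Fract_nat_saturation_in_QR[OF g] Fract_nat_saturation_in_QR[OF h] by simp
qed

end
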